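(* For every integer $k\ge 2$ and every positive integer $n$, \[ t_{2k+1}(n)\le 9(k-1)\,\mathrm{ex}\!\left(\left\lceil \tfrac{n}{3}\right\rceil,\left\lceil \tfrac{n}{3}\right\rceil, C_{2k}\right). \]
   Context: All graphs are simple. For a graph $G$, $t(G)$ denotes the number of triangles ($K_3$ subgraphs) of $G$. A graph is $F$-free if it contains no (not necessarily induced) subgraph isomorphic to $F$. For $\ell\ge 3$, $t_\ell(n)$ is the maximum of $t(G)$ over all $C_\ell$-free graphs $G$ on $n$ vertices, where $C_\ell$ is the cycle of length $\ell$. $\mathrm{ex}(m,n,F)$ denotes the maximum number of edges in a bipartite graph with parts of sizes $m$ and $n$ that contains no subgraph isomorphic to $F$. *)

theory Defs
  imports Main
begin

definition simple_graph :: "'a set \<Rightarrow> 'a set set \<Rightarrow> bool" where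
  "simple_graph V E \<longleftrightarrow> E \<subseteq> {e. \<exists>x y. e = {x, y} \<and> x \<noteq> y \<and> x \<in> V \<and> y \<in> V}"

definition has_cycle :: "'a set set \<Rightarrow> nat \<Rightarrow> bool" where
  "has_cycle E l \<longleftrightarrow> (\<exists>f :: nat \<Rightarrow> 'a. inj_on f {0..<l} \<and>
      (\<forall>i<l. {f i, f ((i + 1) mod l)} \<in> E))"

definition triangles :: "'a set \<Rightarrow> 'a set set \<Rightarrow> nat" where
  "triangles V E = card {T. T \<subseteq> V \<and> card T = 3 \<and>
      (\<forall>x\<in>T. \<forall>y\<in>T. x \<noteq> y \<longrightarrow> {x, y} \<in> E)}"

text \<open>t_l(n): max number of triangles in a C_l-free graph on n vertices
  (vertex set {0..<n}, w.l.o.g. up to isomorphism).\<close>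
definition t_cyc :: "nat \<Rightarrow> nat \<Rightarrow> nat" where
  "t_cyc l n = Max {triangles {0..<n} E | E. simple_graph {0..<n} E \<and> \<not> has_cycle E l}"

text \<open>The bipartite graph with parts {Inl i | i<m} and {Inr j | j<n} and edge set B.\<close>
definition bip_graph :: "(nat \<times> nat) set \<Rightarrow> (nat + nat) set set" where
  "bip_graph B = {{Inl i, Inr j} | i j. (i, j) \<in> B}"

definition ex_bip_cyc :: "nat \<Rightarrow> nat \<Rightarrow> nat \<Rightarrow> nat" where
  "ex_bip_cyc m n l = Max {card B | B. B \<subseteq> {0..<m} \<times> {0..<n} \<and> \<not> has_cycle (bip_graph B) l}"

end

theory Submission
  imports Defs "HOL-Combinatorics.Permutations"
begin

text \<open>A permutation \<open>\<sigma>\<close> gives vertex \<open>x\<close> the colour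
  \<open>\<sigma> x mod 3\<close> and the index \<open>\<sigma> x div 3 < \<lceil>n/3\<rceil>\<close>. For \<open>x\<close> of colour 0, the edges \<open>yz\<close> between
  colours 1 and 2 spanning a triangle with \<open>x\<close> form a bipartite graph without a path on \<open>2k\<close>
  vertices (it would close a \<open>C\<^sub>2\<^sub>k\<^sub>+\<^sub>1\<close> through \<open>x\<close>), so by the bipartite Erd\H{o}s--Gallai bound
  it has at most \<open>k - 1\<close> times as many edges as vertices. Summing over \<open>x\<close>, the rainbow triangles
  number at most \<open>(k - 1) (|H\<^sub>0\<^sub>1| + |H\<^sub>0\<^sub>2|)\<close>, where \<open>H\<^sub>a\<^sub>b\<close> consists of the \<open>ab\<close>-edges lying in a
  triangle with the third colour; a \<open>C\<^sub>2\<^sub>k\<close> in \<open>H\<^sub>a\<^sub>b\<close> would again close a \<open>C\<^sub>2\<^sub>k\<^sub>+\<^sub>1\<close>, so, read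
  through the indices, \<open>|H\<^sub>a\<^sub>b| \<le> ex(\<lceil>n/3\<rceil>, \<lceil>n/3\<rceil>, C\<^sub>2\<^sub>k)\<close>. Averaging over all \<open>\<sigma>\<close>, at least a
  \<open>2/9\<close> fraction of the triangles is rainbow.\<close>

section \<open>Long paths in bipartite relations\<close>

text \<open>A relation \<open>L\<close> is read as a bipartite graph with sides \<open>fst ` L\<close> and \<open>snd ` L\<close>; its edges are
  traversed in either direction.\<close>
definition rel_path :: "('a \<times> 'a) set \<Rightarrow> 'a list \<Rightarrow> bool" where
  "rel_path L p \<longleftrightarrow> distinct p \<and> set p \<subseteq> fst ` L \<union> snd ` L \<and>
     (\<forall>i. Suc i < length p \<longrightarrow> (p ! i, p ! Suc i) \<in> L \<or> (p ! Suc i, p ! i) \<in> L)"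

definition rel_degree :: "('a \<times> 'a) set \<Rightarrow> 'a \<Rightarrow> nat" where
  "rel_degree L u = card {e \<in> L. fst e = u \<or> snd e = u}"

lemma rel_path_mono: "L' \<subseteq> L \<Longrightarrow> rel_path L' p \<Longrightarrow> rel_path L p"
  unfolding rel_path_def by blast

lemma rel_path_take: "rel_path L p \<Longrightarrow> rel_path L (take n p)"
  unfolding rel_path_def by (auto dest: in_set_takeD)

lemma rel_path_Cons:
  assumes "rel_path L p" "p \<noteq> []" "w \<notin> set p" "(w, hd p) \<in> L \<or> (hd p, w) \<in> L"
  shows "rel_path L (w # p)"
  unfolding rel_path_def
proof (intro conjI allI impI)
  show "distinct (w # p)" using assms by (simp add: rel_path_def)
  have "w \<in> fst ` L \<union> snd ` L"
    using assms(4) by force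
  then show "set (w # p) \<subseteq> fst ` L \<union> snd ` L"
    using assms(1) by (simp add: rel_path_def)
  fix i assume "Suc i < length (w # p)"
  then show "((w # p) ! i, (w # p) ! Suc i) \<in> L \<or> ((w # p) ! Suc i, (w # p) ! i) \<in> L"
    using assms by (cases i) (auto simp: rel_path_def hd_conv_nth)
qed

lemma related_sides_differ:
  assumes "fst ` L \<inter> snd ` L = {}" "(u, w) \<in> L \<or> (w, u) \<in> L"
  shows "(w \<in> fst ` L) \<longleftrightarrow> (u \<notin> fst ` L)"
  using assms by force

lemma rel_path_alternates:
  assumes disj: "fst ` L \<inter> snd ` L = {}" and p: "rel_path L p" and i: "i < length p"
  shows "(p ! i \<in> fst ` L) \<longleftrightarrow> (even i \<longleftrightarrow> p ! 0 \<in> fst ` L)"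
  using i
proof (induction i)
  case (Suc i)
  then have "(p ! i, p ! Suc i) \<in> L \<or> (p ! Suc i, p ! i) \<in> L"
    using p unfolding rel_path_def by blast
  then have "(p ! Suc i \<in> fst ` L) \<longleftrightarrow> (p ! i \<notin> fst ` L)"
    by (rule related_sides_differ[OF disj])
  with Suc show ?case by (cases "even i") simp_all
qed simp

lemma rel_degree_le_card_neighbours:
  assumes "finite L" and "fst ` L \<inter> snd ` L = {}"
  shows "rel_degree L u \<le> card {w. (u, w) \<in> L \<or> (w, u) \<in> L}"
proof -
  let ?D = "{e \<in> L. fst e = u \<or> snd e = u}"
  let ?other = "\<lambda>e::'a \<times> 'a. if fst e = u then snd e else fst e"
  have inj: "inj_on ?other ?D"
  proof (rule inj_onI)
    fix e e' assume e: "e \<in> ?D" and e': "e' \<in> ?D" and eq: "?other e = ?other e'"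
    have "fst e = u \<longleftrightarrow> fst e' = u"
      using e e' assms(2) by force
    with e e' eq show "e = e'"
      by (cases e, cases e') (auto split: if_splits)
  qed
  have sub: "?other ` ?D \<subseteq> {w. (u, w) \<in> L \<or> (w, u) \<in> L}"
  proof
    fix w assume "w \<in> ?other ` ?D"
    then obtain a b where "(a, b) \<in> L" "a = u \<or> b = u" "w = (if a = u then b else a)"
      by auto
    then show "w \<in> {w. (u, w) \<in> L \<or> (w, u) \<in> L}" by auto
  qed
  have fin: "finite {w. (u, w) \<in> L \<or> (w, u) \<in> L}"
    by (rule finite_subset[of _ "fst ` L \<union> snd ` L"]) (force, simp add: assms(1))
  show ?thesis
    unfolding rel_degree_def using card_inj_on_le[OF inj sub fin] .
qed

lemma card_neighbours_of_hd_le: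
  assumes disj: "fst ` L \<inter> snd ` L = {}" and p: "rel_path L p" "p \<noteq> []"
    and closed: "{w. (hd p, w) \<in> L \<or> (w, hd p) \<in> L} \<subseteq> set p"
  shows "card {w. (hd p, w) \<in> L \<or> (w, hd p) \<in> L} \<le> length p div 2"
proof -
  let ?N = "{w. (hd p, w) \<in> L \<or> (w, hd p) \<in> L}"
  have "?N \<subseteq> (\<lambda>j. p ! (2 * j + 1)) ` {..<length p div 2}"
  proof
    fix w assume w: "w \<in> ?N"
    then have "w \<in> set p" using closed by blast
    then obtain i where i: "i < length p" "w = p ! i"
      by (auto simp: in_set_conv_nth)
    have "(w \<in> fst ` L) \<longleftrightarrow> (p ! 0 \<notin> fst ` L)"
      using related_sides_differ[OF disj] w p(2) by (simp add: hd_conv_nth)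
    then have "odd i"
      using rel_path_alternates[OF disj p(1) i(1)] i(2) by auto
    then obtain j where "i = 2 * j + 1" by (rule oddE)
    with i show "w \<in> (\<lambda>j. p ! (2 * j + 1)) ` {..<length p div 2}" by auto
  qed
  then have "card ?N \<le> card ((\<lambda>j. p ! (2 * j + 1)) ` {..<length p div 2})"
    by (rule card_mono[rotated]) simp
  also have "\<dots> \<le> length p div 2"
    using card_image_le[of "{..<length p div 2}"] by simp
  finally show ?thesis .
qed

text \<open>A longest path cannot be extended at its head, so all neighbours of the head lie on it,
  and by alternation they occupy odd positions.\<close>
lemma rel_path_of_min_degree:
  assumes fin: "finite L" and disj: "fst ` L \<inter> snd ` L = {}" and "L \<noteq> {}"
    and deg: "\<forall>u \<in> fst ` L \<union> snd ` L. k \<le> rel_degree L u"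
  shows "\<exists>p. rel_path L p \<and> length p = 2 * k"
proof -
  let ?V = "fst ` L \<union> snd ` L"
  obtain u where u: "u \<in> ?V" using \<open>L \<noteq> {}\<close> by fastforce
  have "rel_path L [u]" using u by (simp add: rel_path_def)
  moreover have "length p < Suc (card ?V)" if "rel_path L p" for p
    using that fin distinct_card[of p] card_mono[of ?V "set p"] by (simp add: rel_path_def)
  ultimately obtain p where p: "rel_path L p"
    and longest: "\<And>q. rel_path L q \<Longrightarrow> length q \<le> length p"
    using ex_has_greatest_nat[of "rel_path L" "[u]" length] by blast
  have "p \<noteq> []" using longest[OF \<open>rel_path L [u]\<close>] by auto
  let ?N = "{w. (hd p, w) \<in> L \<or> (w, hd p) \<in> L}"
  have "?N \<subseteq> set p"
  proof
    fix w assume "w \<in> ?N"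
    show "w \<in> set p"
    proof (rule ccontr)
      assume "w \<notin> set p"
      with \<open>w \<in> ?N\<close> have "rel_path L (w # p)"
        using rel_path_Cons[OF p \<open>p \<noteq> []\<close>] by blast
      then show False using longest by fastforce
    qed
  qed
  have "hd p \<in> ?V" using p \<open>p \<noteq> []\<close> hd_in_set unfolding rel_path_def by blast
  then have "k \<le> rel_degree L (hd p)" using deg by blast
  also have "\<dots> \<le> card ?N" by (rule rel_degree_le_card_neighbours[OF fin disj])
  also have "\<dots> \<le> length p div 2"
    by (rule card_neighbours_of_hd_le[OF disj p \<open>p \<noteq> []\<close> \<open>?N \<subseteq> set p\<close>])
  finally have "2 * k \<le> length p" by linarith
  then show ?thesis using rel_path_take[OF p, of "2 * k"] by auto
qed

lemma card_sides_delete_vertex_less: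
  assumes fin: "finite L" and u: "u \<in> fst ` L \<union> snd ` L"
  defines "L' \<equiv> {e \<in> L. fst e \<noteq> u \<and> snd e \<noteq> u}"
  shows "card (fst ` L') + card (snd ` L') < card (fst ` L) + card (snd ` L)"
proof -
  have sub: "fst ` L' \<subseteq> fst ` L - {u}" "snd ` L' \<subseteq> snd ` L - {u}"
    unfolding L'_def by auto
  have fin': "finite (fst ` L)" "finite (snd ` L)" using fin by simp_all
  have le: "card (fst ` L') \<le> card (fst ` L)" "card (snd ` L') \<le> card (snd ` L)"
    using sub fin' by (meson Diff_subset card_mono subset_trans)+
  from u show ?thesis
  proof
    assume "u \<in> fst ` L"
    have "card (fst ` L') \<le> card (fst ` L - {u})" using sub(1) fin'(1) by (simp add: card_mono)
    also have "\<dots> < card (fst ` L)" using card_Diff1_less[OF fin'(1) \<open>u \<in> fst ` L\<close>] .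
    finally have "card (fst ` L') < card (fst ` L)" .
    with le show ?thesis by linarith
  next
    assume "u \<in> snd ` L"
    have "card (snd ` L') \<le> card (snd ` L - {u})" using sub(2) fin'(2) by (simp add: card_mono)
    also have "\<dots> < card (snd ` L)" using card_Diff1_less[OF fin'(2) \<open>u \<in> snd ` L\<close>] .
    finally have "card (snd ` L') < card (snd ` L)" .
    with le show ?thesis by linarith
  qed
qed

text \<open>Bipartite Erd\H{o}s--Gallai: without such paths some vertex has degree below \<open>k\<close>;
  delete it and induct.\<close>
lemma card_le_of_no_rel_path:
  assumes "finite L" and "fst ` L \<inter> snd ` L = {}" and "\<nexists>p. rel_path L p \<and> length p = 2 * k"
  shows "card L \<le> (k - 1) * (card (fst ` L) + card (snd ` L))"
  using assms
proof (induction "card (fst ` L) + card (snd ` L)" arbitrary: L rule: less_induct)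
  case less
  show ?case
  proof (cases "L = {}")
    case False
    then have "\<not> (\<forall>u \<in> fst ` L \<union> snd ` L. k \<le> rel_degree L u)"
      using rel_path_of_min_degree[OF less.prems(1,2)] less.prems(3) by blast
    then obtain u where u: "u \<in> fst ` L \<union> snd ` L" and deg: "rel_degree L u < k"
      by (auto simp: not_le)
    define L' where "L' = {e \<in> L. fst e \<noteq> u \<and> snd e \<noteq> u}"
    have "L' \<subseteq> L" unfolding L'_def by blast
    have "finite L'" using less.prems(1) unfolding L'_def by simp
    moreover have "fst ` L' \<inter> snd ` L' = {}" using less.prems(2) \<open>L' \<subseteq> L\<close> by blast
    moreover have "\<nexists>p. rel_path L' p \<and> length p = 2 * k"
      using less.prems(3) rel_path_mono[OF \<open>L' \<subseteq> L\<close>] by blast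
    ultimately have IH: "card L' \<le> (k - 1) * (card (fst ` L') + card (snd ` L'))"
      by (rule less.hyps[OF card_sides_delete_vertex_less[OF less.prems(1) u, folded L'_def]])
    have split: "card L = card L' + rel_degree L u"
    proof -
      let ?D = "{e \<in> L. fst e = u \<or> snd e = u}"
      have "L = L' \<union> ?D" "L' \<inter> ?D = {}" unfolding L'_def by blast+
      moreover have "finite L'" "finite ?D" using less.prems(1) unfolding L'_def by simp_all
      ultimately show ?thesis
        unfolding rel_degree_def by (metis card_Un_disjoint)
    qed
    have "card (fst ` L') + card (snd ` L') + 1 \<le> card (fst ` L) + card (snd ` L)"
      using card_sides_delete_vertex_less[OF less.prems(1) u] unfolding L'_def by linarith
    then have shrink: "(k - 1) * (card (fst ` L') + card (snd ` L') + 1)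
        \<le> (k - 1) * (card (fst ` L) + card (snd ` L))"
      by (rule mult_le_mono2)
    have "card L \<le> (k - 1) * (card (fst ` L') + card (snd ` L')) + (k - 1)"
      using IH split deg by linarith
    also have "\<dots> = (k - 1) * (card (fst ` L') + card (snd ` L') + 1)" by simp
    also note shrink
    finally show ?thesis .
  qed simp
qed

section \<open>Rainbow triangles\<close>

lemma has_cycle_close_path:
  assumes "l \<ge> 1" and inj: "inj_on p {0..<l}" and path: "\<And>i. Suc i < l \<Longrightarrow> {p i, p (Suc i)} \<in> E"
    and z: "z \<notin> p ` {0..<l}" "{z, p 0} \<in> E" "{p (l - 1), z} \<in> E"
  shows "has_cycle E (Suc l)"
  unfolding has_cycle_def
proof (intro exI conjI allI impI)
  let ?f = "\<lambda>i. if i = 0 then z else p (i - 1)"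
  have pz: "p i \<noteq> z" if "i < l" for i
    using z(1) that by auto
  show "inj_on ?f {0..<Suc l}"
  proof (rule inj_onI)
    fix i j assume "i \<in> {0..<Suc l}" "j \<in> {0..<Suc l}" and eq: "?f i = ?f j"
    then have "i - 1 < l" "j - 1 < l" using \<open>l \<ge> 1\<close> by auto
    show "i = j"
    proof (cases "i = 0"; cases "j = 0")
      assume "i \<noteq> 0" "j \<noteq> 0"
      then have "p (i - 1) = p (j - 1)" using eq by simp
      then have "i - 1 = j - 1" using inj_onD[OF inj] \<open>i - 1 < l\<close> \<open>j - 1 < l\<close> by simp
      then show ?thesis using \<open>i \<noteq> 0\<close> \<open>j \<noteq> 0\<close> by simp
    qed (use eq pz[OF \<open>i - 1 < l\<close>] pz[OF \<open>j - 1 < l\<close>] in \<open>auto split: if_splits\<close>)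
  qed
  fix i assume "i < Suc l"
  then consider "i = 0" | "0 < i" "i < l" | "i = l" by linarith
  then show "{?f i, ?f ((i + 1) mod Suc l)} \<in> E"
  proof cases
    case 1 then show ?thesis using z(2) \<open>l \<ge> 1\<close> by simp
  next
    case 2 then show ?thesis using path[of "i - 1"] by simp
  next
    case 3 then show ?thesis using z(3) \<open>l \<ge> 1\<close> by simp
  qed
qed

lemma card_le_ex_bip_cyc:
  assumes "B \<subseteq> {0..<m} \<times> {0..<n}" and "\<not> has_cycle (bip_graph B) l"
  shows "card B \<le> ex_bip_cyc m n l"
  unfolding ex_bip_cyc_def
proof (rule Max_ge)
  show "finite {card B | B. B \<subseteq> {0..<m} \<times> {0..<n} \<and> \<not> has_cycle (bip_graph B) l}"
    by (rule finite_subset[of _ "card ` Pow ({0..<m} \<times> {0..<n})"]) auto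
qed (use assms in blast)

definition triangle_edges ::
    "'a set \<Rightarrow> 'a set set \<Rightarrow> ('a \<Rightarrow> nat) \<Rightarrow> nat \<Rightarrow> nat \<Rightarrow> nat \<Rightarrow> ('a \<times> 'a) set" where
  "triangle_edges S E col a b c = {(x, y). x \<in> S \<and> y \<in> S \<and> col x = a \<and> col y = b \<and> {x, y} \<in> E \<and>
     (\<exists>z \<in> S. col z = c \<and> {x, z} \<in> E \<and> {y, z} \<in> E)}"

definition lift_vertex :: "'a set \<Rightarrow> ('a \<Rightarrow> nat) \<Rightarrow> ('a \<Rightarrow> nat) \<Rightarrow> nat \<Rightarrow> nat \<Rightarrow> nat + nat \<Rightarrow> 'a" where
  "lift_vertex S col idx a b u = inv_into S (\<lambda>x. (col x, idx x)) (case_sum (Pair a) (Pair b) u)"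

lemma lift_vertex_edge:
  assumes inj: "inj_on (\<lambda>x. (col x, idx x)) S"
    and uv: "{u, v} \<in> bip_graph (map_prod idx idx ` triangle_edges S E col a b c)"
  defines "g \<equiv> lift_vertex S col idx a b"
  shows "g u \<in> S \<and> (col (g u), idx (g u)) = case_sum (Pair a) (Pair b) u"
    and "{g u, g v} \<in> E \<and> (\<exists>z \<in> S. col z = c \<and> {g u, z} \<in> E \<and> {g v, z} \<in> E)"
proof -
  have g_lab: "g w = x" if "x \<in> S" "(col x, idx x) = case_sum (Pair a) (Pair b) w" for x w
    using inv_into_f_f[OF inj \<open>x \<in> S\<close>] that unfolding g_def lift_vertex_def by simp
  obtain i j where "{u, v} = {Inl i, Inr j}" "(i, j) \<in> map_prod idx idx ` triangle_edges S E col a b c"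
    using uv unfolding bip_graph_def by blast
  then obtain x y where xy: "(x, y) \<in> triangle_edges S E col a b c"
    and uv_xy: "{u, v} = {Inl (idx x), Inr (idx y)}"
    by auto
  have "x \<in> S" "col x = a" "y \<in> S" "col y = b"
    using xy unfolding triangle_edges_def by auto
  then have gx: "g (Inl (idx x)) = x" and gy: "g (Inr (idx y)) = y"
    using g_lab by auto
  from uv_xy consider "u = Inl (idx x)" "v = Inr (idx y)" | "u = Inr (idx y)" "v = Inl (idx x)"
    by (auto simp: doubleton_eq_iff)
  then show "g u \<in> S \<and> (col (g u), idx (g u)) = case_sum (Pair a) (Pair b) u"
    and "{g u, g v} \<in> E \<and> (\<exists>z \<in> S. col z = c \<and> {g u, z} \<in> E \<and> {g v, z} \<in> E)"
    by (cases; use xy gx gy in \<open>auto simp: triangle_edges_def insert_commute\<close>)+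
qed

text \<open>A \<open>2k\<close>-cycle among these edges, relabelled by indices, lifts back to \<open>E\<close>; the third vertex of
  the triangle on its closing edge has colour \<open>c\<close>, so it lies off the cycle and closes a
  \<open>(2k+1)\<close>-cycle.\<close>
lemma no_even_cycle_triangle_edges:
  assumes inj: "inj_on (\<lambda>x. (col x, idx x)) S" and "a \<noteq> b" "a \<noteq> c" "b \<noteq> c"
    and "k \<ge> 1" and no_odd: "\<not> has_cycle E (2 * k + 1)"
  shows "\<not> has_cycle (bip_graph (map_prod idx idx ` triangle_edges S E col a b c)) (2 * k)"
proof
  let ?G = "bip_graph (map_prod idx idx ` triangle_edges S E col a b c)"
  assume "has_cycle ?G (2 * k)"
  then obtain f where f_inj: "inj_on f {0..<2 * k}"
    and f_edge: "\<And>i. i < 2 * k \<Longrightarrow> {f i, f ((i + 1) mod (2 * k))} \<in> ?G"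
    unfolding has_cycle_def by blast
  let ?side = "case_sum (Pair a) (Pair b) :: nat + nat \<Rightarrow> nat \<times> nat"
  let ?q = "lift_vertex S col idx a b \<circ> f"
  have q_lab: "(col (?q i), idx (?q i)) = ?side (f i)" if "i < 2 * k" for i
    using lift_vertex_edge(1)[OF inj f_edge[OF that]] by simp
  have "inj_on ?side UNIV"
    using \<open>a \<noteq> b\<close> by (auto simp: inj_on_def split: sum.splits)
  have q_inj: "inj_on ?q {0..<2 * k}"
  proof (rule inj_onI)
    fix i j assume "i \<in> {0..<2 * k}" "j \<in> {0..<2 * k}" and "?q i = ?q j"
    then have "?side (f i) = ?side (f j)" using q_lab by (metis atLeastLessThan_iff)
    then show "i = j"
      using inj_onD[OF f_inj] inj_onD[OF \<open>inj_on ?side UNIV\<close>] \<open>i \<in> _\<close> \<open>j \<in> _\<close> by blast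
  qed
  have q_path: "{?q i, ?q (Suc i)} \<in> E" if "Suc i < 2 * k" for i
    using lift_vertex_edge(2)[OF inj f_edge[of i]] that by simp
  have "(2 * k - 1 + 1) mod (2 * k) = 0" using \<open>k \<ge> 1\<close> by simp
  then obtain z where z: "z \<in> S" "col z = c" "{?q (2 * k - 1), z} \<in> E" "{?q 0, z} \<in> E"
    using lift_vertex_edge(2)[OF inj f_edge[of "2 * k - 1"]] \<open>k \<ge> 1\<close> by auto
  have "col (?q i) \<noteq> c" if "i < 2 * k" for i
    using q_lab[OF that] \<open>a \<noteq> c\<close> \<open>b \<noteq> c\<close> by (auto split: sum.splits)
  then have "z \<notin> ?q ` {0..<2 * k}"
    using z(2) by (metis atLeastLessThan_iff imageE)
  then have "has_cycle E (Suc (2 * k))"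
    using has_cycle_close_path[OF _ q_inj q_path] z \<open>k \<ge> 1\<close> by (simp add: insert_commute)
  then show False using no_odd by simp
qed

lemma card_triangle_edges_le:
  assumes inj: "inj_on (\<lambda>x. (col x, idx x)) S" and idx_less: "\<forall>x \<in> S. idx x < m"
    and "a \<noteq> b" "a \<noteq> c" "b \<noteq> c" and "k \<ge> 1" and "\<not> has_cycle E (2 * k + 1)"
  shows "card (triangle_edges S E col a b c) \<le> ex_bip_cyc m m (2 * k)"
proof -
  let ?T = "triangle_edges S E col a b c"
  have "inj_on (map_prod idx idx) ?T"
  proof (rule inj_onI)
    fix e e' assume "e \<in> ?T" "e' \<in> ?T" and eq: "map_prod idx idx e = map_prod idx idx e'"
    then obtain x y x' y' where "e = (x, y)" "e' = (x', y')" "x \<in> S" "y \<in> S" "x' \<in> S" "y' \<in> S"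
      "col x = col x'" "col y = col y'"
      by (auto simp: triangle_edges_def)
    with eq show "e = e'" using inj_onD[OF inj] by simp
  qed
  then have "card ?T = card (map_prod idx idx ` ?T)" by (simp add: card_image)
  also have "\<dots> \<le> ex_bip_cyc m m (2 * k)"
  proof (rule card_le_ex_bip_cyc)
    show "map_prod idx idx ` ?T \<subseteq> {0..<m} \<times> {0..<m}"
      using idx_less by (auto simp: triangle_edges_def)
    show "\<not> has_cycle (bip_graph (map_prod idx idx ` ?T)) (2 * k)"
      by (rule no_even_cycle_triangle_edges[OF inj assms(3-7)])
  qed
  finally show ?thesis .
qed

definition link :: "'a set \<Rightarrow> 'a set set \<Rightarrow> ('a \<Rightarrow> nat) \<Rightarrow> nat \<Rightarrow> nat \<Rightarrow> 'a \<Rightarrow> ('a \<times> 'a) set" where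
  "link S E col b c x = {(y, z). y \<in> S \<and> z \<in> S \<and> col y = b \<and> col z = c \<and>
     {x, y} \<in> E \<and> {x, z} \<in> E \<and> {y, z} \<in> E}"

lemma finite_link: "finite S \<Longrightarrow> finite (link S E col b c x)"
  by (rule finite_subset[of _ "S \<times> S"]) (auto simp: link_def)

lemma no_long_rel_path_link:
  assumes "col x \<noteq> b" "col x \<noteq> c" and "k \<ge> 1" and no_odd: "\<not> has_cycle E (2 * k + 1)"
  shows "\<nexists>p. rel_path (link S E col b c x) p \<and> length p = 2 * k"
proof
  assume "\<exists>p. rel_path (link S E col b c x) p \<and> length p = 2 * k"
  then obtain p where p: "rel_path (link S E col b c x) p" and len: "length p = 2 * k" by blast
  have on_link: "{x, w} \<in> E \<and> col w \<in> {b, c}" if "w \<in> set p" for w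
    using p that unfolding rel_path_def link_def by auto
  have "x \<notin> set p"
  proof
    assume "x \<in> set p"
    then show False using on_link[of x] assms(1,2) by blast
  qed
  have "has_cycle E (Suc (2 * k))"
  proof (rule has_cycle_close_path)
    show "inj_on ((!) p) {0..<2 * k}"
      using p len by (simp add: rel_path_def inj_on_def nth_eq_iff_index_eq)
    show "{p ! i, p ! Suc i} \<in> E" if "Suc i < 2 * k" for i
    proof -
      have "Suc i < length p" using that len by simp
      then have "(p ! i, p ! Suc i) \<in> link S E col b c x \<or> (p ! Suc i, p ! i) \<in> link S E col b c x"
        using p unfolding rel_path_def by blast
      then show ?thesis
      proof
        assume "(p ! i, p ! Suc i) \<in> link S E col b c x"
        then show ?thesis by (simp add: link_def)
      next
        assume "(p ! Suc i, p ! i) \<in> link S E col b c x"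
        then show ?thesis by (simp add: link_def insert_commute)
      qed
    qed
    show "x \<notin> (!) p ` {0..<2 * k}"
      using \<open>x \<notin> set p\<close> len by (metis atLeastLessThan_iff imageE nth_mem)
    show "{x, p ! 0} \<in> E" using on_link[of "p ! 0"] \<open>k \<ge> 1\<close> len by simp
    show "{p ! (2 * k - 1), x} \<in> E"
      using on_link[of "p ! (2 * k - 1)"] \<open>k \<ge> 1\<close> len by (simp add: insert_commute)
  qed (use \<open>k \<ge> 1\<close> in simp)
  then show False using no_odd by simp
qed

lemma card_link_le:
  assumes "finite S" and "b \<noteq> c" and "col x \<noteq> b" "col x \<noteq> c" and "k \<ge> 1"
    and "\<not> has_cycle E (2 * k + 1)"
  shows "card (link S E col b c x)
    \<le> (k - 1) * (card (fst ` link S E col b c x) + card (snd ` link S E col b c x))"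
proof (rule card_le_of_no_rel_path)
  show "finite (link S E col b c x)" using \<open>finite S\<close> by (rule finite_link)
  show "fst ` link S E col b c x \<inter> snd ` link S E col b c x = {}"
    using \<open>b \<noteq> c\<close> by (auto simp: link_def)
qed (rule no_long_rel_path_link[where col = col and x = x, OF assms(3-6)])

lemma snd_link_eq: "snd ` link S E col b c x = fst ` link S E col c b x"
proof -
  have "link S E col c b x = prod.swap ` link S E col b c x"
    unfolding link_def by (auto simp: insert_commute image_iff)
  then show ?thesis by (simp add: image_image)
qed

lemma sum_card_fst_link_le:
  assumes "finite S"
  shows "(\<Sum>x \<in> {x \<in> S. col x = a}. card (fst ` link S E col b c x))
    \<le> card (triangle_edges S E col a b c)"
proof -
  let ?A = "{x \<in> S. col x = a}"
  have "(\<Sum>x \<in> ?A. card (fst ` link S E col b c x)) = card (SIGMA x:?A. fst ` link S E col b c x)"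
    by (rule card_SigmaI[symmetric]) (simp_all add: assms finite_link)
  also have "\<dots> \<le> card (triangle_edges S E col a b c)"
  proof (rule card_mono)
    show "finite (triangle_edges S E col a b c)"
      by (rule finite_subset[of _ "S \<times> S"]) (auto simp: triangle_edges_def assms)
    show "(SIGMA x:?A. fst ` link S E col b c x) \<subseteq> triangle_edges S E col a b c"
      unfolding link_def triangle_edges_def by force
  qed
  finally show ?thesis .
qed

lemma card_rainbow_triangles_le_sum_link:
  assumes "finite S" and "a \<noteq> b" "a \<noteq> c" "b \<noteq> c"
  shows "card {T. T \<subseteq> S \<and> card T = 3 \<and> (\<forall>x\<in>T. \<forall>y\<in>T. x \<noteq> y \<longrightarrow> {x, y} \<in> E) \<and> col ` T = {a, b, c}}
    \<le> (\<Sum>x \<in> {x \<in> S. col x = a}. card (link S E col b c x))"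
    (is "card ?R \<le> _")
proof -
  let ?A = "{x \<in> S. col x = a}"
  have fin_Sigma: "finite (SIGMA x:?A. link S E col b c x)"
    by (rule finite_SigmaI) (simp_all add: assms(1) finite_link)
  have "?R \<subseteq> (\<lambda>(x, y, z). {x, y, z}) ` (SIGMA x:?A. link S E col b c x)"
  proof
    fix T assume "T \<in> ?R"
    then have T: "T \<subseteq> S" "card T = 3" "\<forall>x\<in>T. \<forall>y\<in>T. x \<noteq> y \<longrightarrow> {x, y} \<in> E" "col ` T = {a, b, c}"
      by auto
    then obtain x y z where xyz: "x \<in> T" "col x = a" "y \<in> T" "col y = b" "z \<in> T" "col z = c"
      by (metis imageE insertI1 insertI2)
    then have "x \<noteq> y" "x \<noteq> z" "y \<noteq> z" using assms(2-4) by auto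
    then have "card {x, y, z} = card T" using T(2) by simp
    moreover have "finite T" using T(2) by (simp add: card_ge_0_finite)
    moreover have "{x, y, z} \<subseteq> T" using xyz by simp
    ultimately have "T = {x, y, z}" using card_subset_eq by metis
    moreover have "(y, z) \<in> link S E col b c x"
      using T(1,3) xyz \<open>x \<noteq> y\<close> \<open>x \<noteq> z\<close> \<open>y \<noteq> z\<close> unfolding link_def by auto
    ultimately show "T \<in> (\<lambda>(x, y, z). {x, y, z}) ` (SIGMA x:?A. link S E col b c x)"
      using xyz T(1) by force
  qed
  then have "card ?R \<le> card ((\<lambda>(x, y, z). {x, y, z}) ` (SIGMA x:?A. link S E col b c x))"
    using fin_Sigma by (simp add: card_mono)
  also have "\<dots> \<le> card (SIGMA x:?A. link S E col b c x)"
    using fin_Sigma by (rule card_image_le)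
  also have "\<dots> = (\<Sum>x \<in> ?A. card (link S E col b c x))"
    by (rule card_SigmaI) (simp_all add: assms(1) finite_link)
  finally show ?thesis .
qed

lemma card_rainbow_triangles_le:
  fixes col idx :: "'a \<Rightarrow> nat"
  assumes "finite S" and "a \<noteq> b" "a \<noteq> c" "b \<noteq> c"
    and inj: "inj_on (\<lambda>x. (col x, idx x)) S" and idx_less: "\<forall>x \<in> S. idx x < m"
    and "k \<ge> 1" and no_odd: "\<not> has_cycle E (2 * k + 1)"
  shows "card {T. T \<subseteq> S \<and> card T = 3 \<and> (\<forall>x\<in>T. \<forall>y\<in>T. x \<noteq> y \<longrightarrow> {x, y} \<in> E) \<and> col ` T = {a, b, c}}
    \<le> 2 * (k - 1) * ex_bip_cyc m m (2 * k)"
proof -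
  let ?A = "{x \<in> S. col x = a}"
  let ?X = "ex_bip_cyc m m (2 * k)"
  let ?fst = "\<lambda>b c x. card (fst ` link S E col b c x)"
  have "card {T. T \<subseteq> S \<and> card T = 3 \<and> (\<forall>x\<in>T. \<forall>y\<in>T. x \<noteq> y \<longrightarrow> {x, y} \<in> E) \<and> col ` T = {a, b, c}}
      \<le> (\<Sum>x \<in> ?A. card (link S E col b c x))"
    using card_rainbow_triangles_le_sum_link assms(1-4) .
  also have "\<dots> \<le> (\<Sum>x \<in> ?A. (k - 1) * (?fst b c x + ?fst c b x))"
    using card_link_le[OF assms(1,4) _ _ \<open>k \<ge> 1\<close> no_odd] \<open>a \<noteq> b\<close> \<open>a \<noteq> c\<close>
    by (intro sum_mono) (simp add: snd_link_eq)
  also have "\<dots> = (k - 1) * ((\<Sum>x \<in> ?A. ?fst b c x) + (\<Sum>x \<in> ?A. ?fst c b x))"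
    by (simp only: sum.distrib[symmetric] sum_distrib_left)
  also have "\<dots> \<le> (k - 1) * (card (triangle_edges S E col a b c) + card (triangle_edges S E col a c b))"
    using sum_card_fst_link_le[OF \<open>finite S\<close>] by (intro mult_le_mono2 add_mono)
  also have "\<dots> \<le> (k - 1) * (?X + ?X)"
    using card_triangle_edges_le[OF inj idx_less] assms(2-4) \<open>k \<ge> 1\<close> no_odd
    by (intro mult_le_mono2 add_mono) auto
  also have "\<dots> = 2 * (k - 1) * ?X" by simp
  finally show ?thesis .
qed

section \<open>Averaging over permutations\<close>

lemma exists_permutes_image_eq:
  assumes "finite S" and "T \<subseteq> S" "T' \<subseteq> S" and "card T' = card T"
  shows "\<exists>\<tau>. \<tau> permutes S \<and> \<tau> ` T' = T"
proof -
  have fin: "finite T" "finite T'" "finite (S - T)" "finite (S - T')"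
    using assms(1-3) finite_subset by auto
  obtain g where g: "bij_betw g T' T"
    using finite_same_card_bij[OF fin(2,1) assms(4)] by blast
  have "card (S - T') = card (S - T)"
    using assms fin by (simp add: card_Diff_subset)
  then obtain h where h: "bij_betw h (S - T') (S - T)"
    using finite_same_card_bij[OF fin(4,3)] by blast
  define \<tau> where "\<tau> x = (if x \<in> T' then g x else if x \<in> S then h x else x)" for x
  have "bij_betw \<tau> (T' \<union> (S - T')) (T \<union> (S - T)) \<longleftrightarrow>
      bij_betw (\<lambda>x. if x \<in> T' then g x else h x) (T' \<union> (S - T')) (T \<union> (S - T))"
    by (rule bij_betw_cong) (auto simp: \<tau>_def)
  then have "bij_betw \<tau> (T' \<union> (S - T')) (T \<union> (S - T))"
    using bij_betw_disjoint_Un[OF g h] by blast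
  then have "bij_betw \<tau> S S"
    using assms(2,3) by (simp add: Un_absorb1)
  then have "\<tau> permutes S"
    by (rule bij_imp_permutes) (use assms(3) in \<open>auto simp: \<tau>_def\<close>)
  moreover have "\<tau> ` T' = T"
    using g by (simp add: \<tau>_def bij_betw_def)
  ultimately show ?thesis by blast
qed

lemma card_permutes_image_in_eq:
  assumes "finite S" and "T \<subseteq> S" "T' \<subseteq> S" and "card T' = card T"
  shows "card {\<sigma>. \<sigma> permutes S \<and> \<sigma> ` T \<in> Q} = card {\<sigma>. \<sigma> permutes S \<and> \<sigma> ` T' \<in> Q}"
proof -
  obtain \<tau> where \<tau>: "\<tau> permutes S" "\<tau> ` T' = T"
    using exists_permutes_image_eq[OF assms] by blast
  have inv_\<tau>: "inv \<tau> permutes S" "\<tau> \<circ> inv \<tau> = id" "inv \<tau> \<circ> \<tau> = id"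
    using permutes_inv[OF \<tau>(1)] permutes_inv_o[OF \<tau>(1)] by auto
  have "inv \<tau> ` T = T'"
    unfolding \<tau>(2)[symmetric] using permutes_inj[OF \<tau>(1)] by (rule image_inv_f_f)
  have "bij_betw (\<lambda>\<sigma>. \<sigma> \<circ> \<tau>) {\<sigma>. \<sigma> permutes S \<and> \<sigma> ` T \<in> Q} {\<sigma>. \<sigma> permutes S \<and> \<sigma> ` T' \<in> Q}"
  proof (rule bij_betw_byWitness[where f' = "\<lambda>\<sigma>. \<sigma> \<circ> inv \<tau>"])
    show "\<forall>\<sigma> \<in> {\<sigma>. \<sigma> permutes S \<and> \<sigma> ` T \<in> Q}. \<sigma> \<circ> \<tau> \<circ> inv \<tau> = \<sigma>"
      "\<forall>\<sigma> \<in> {\<sigma>. \<sigma> permutes S \<and> \<sigma> ` T' \<in> Q}. \<sigma> \<circ> inv \<tau> \<circ> \<tau> = \<sigma>"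
      using inv_\<tau> by (simp_all add: comp_assoc)
    show "(\<lambda>\<sigma>. \<sigma> \<circ> \<tau>) ` {\<sigma>. \<sigma> permutes S \<and> \<sigma> ` T \<in> Q} \<subseteq> {\<sigma>. \<sigma> permutes S \<and> \<sigma> ` T' \<in> Q}"
    proof clarify
      fix \<sigma> assume "\<sigma> permutes S" "\<sigma> ` T \<in> Q"
      moreover have "(\<sigma> \<circ> \<tau>) ` T' = \<sigma> ` T" using \<tau>(2) by (metis image_comp)
      ultimately show "\<sigma> \<circ> \<tau> permutes S \<and> (\<sigma> \<circ> \<tau>) ` T' \<in> Q"
        using permutes_compose[OF \<tau>(1)] by simp
    qed
    show "(\<lambda>\<sigma>. \<sigma> \<circ> inv \<tau>) ` {\<sigma>. \<sigma> permutes S \<and> \<sigma> ` T' \<in> Q} \<subseteq> {\<sigma>. \<sigma> permutes S \<and> \<sigma> ` T \<in> Q}"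
    proof clarify
      fix \<sigma> assume "\<sigma> permutes S" "\<sigma> ` T' \<in> Q"
      moreover have "(\<sigma> \<circ> inv \<tau>) ` T = \<sigma> ` T'" using \<open>inv \<tau> ` T = T'\<close> by (metis image_comp)
      ultimately show "\<sigma> \<circ> inv \<tau> permutes S \<and> (\<sigma> \<circ> inv \<tau>) ` T \<in> Q"
        using permutes_compose[OF inv_\<tau>(1)] by simp
    qed
  qed
  then show ?thesis by (rule bij_betw_same_card)
qed

lemma card_subsets_image_in_eq:
  assumes "\<sigma> permutes S"
  shows "card {T. T \<subseteq> S \<and> card T = r \<and> \<sigma> ` T \<in> Q} = card {U. U \<subseteq> S \<and> card U = r \<and> U \<in> Q}"
proof -
  have "inj \<sigma>" "surj \<sigma>" "\<sigma> ` S = S" "inv \<sigma> ` S = S"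
    using permutes_inj[OF assms] permutes_surj[OF assms] permutes_image[OF assms]
      permutes_image[OF permutes_inv[OF assms]] by auto
  have card_img: "card (f ` A) = card A" if "inj f" for f :: "'a \<Rightarrow> 'a" and A
    using that by (simp add: card_image inj_on_subset)
  have "bij_betw ((`) \<sigma>) {T. T \<subseteq> S \<and> card T = r \<and> \<sigma> ` T \<in> Q} {U. U \<subseteq> S \<and> card U = r \<and> U \<in> Q}"
  proof (rule bij_betw_byWitness[where f' = "(`) (inv \<sigma>)"])
    show "\<forall>T \<in> {T. T \<subseteq> S \<and> card T = r \<and> \<sigma> ` T \<in> Q}. inv \<sigma> ` \<sigma> ` T = T"
      using \<open>inj \<sigma>\<close> by (simp add: image_inv_f_f)
    show "\<forall>U \<in> {U. U \<subseteq> S \<and> card U = r \<and> U \<in> Q}. \<sigma> ` inv \<sigma> ` U = U"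
      using \<open>surj \<sigma>\<close> by (simp add: image_f_inv_f)
    show "(`) \<sigma> ` {T. T \<subseteq> S \<and> card T = r \<and> \<sigma> ` T \<in> Q} \<subseteq> {U. U \<subseteq> S \<and> card U = r \<and> U \<in> Q}"
      using \<open>\<sigma> ` S = S\<close> card_img[OF \<open>inj \<sigma>\<close>] by blast
    show "(`) (inv \<sigma>) ` {U. U \<subseteq> S \<and> card U = r \<and> U \<in> Q} \<subseteq> {T. T \<subseteq> S \<and> card T = r \<and> \<sigma> ` T \<in> Q}"
    proof
      fix T assume "T \<in> (`) (inv \<sigma>) ` {U. U \<subseteq> S \<and> card U = r \<and> U \<in> Q}"
      then obtain U where U: "U \<subseteq> S" "card U = r" "U \<in> Q" and T: "T = inv \<sigma> ` U" by blast
      have "T \<subseteq> S" using U(1) \<open>inv \<sigma> ` S = S\<close> T by blast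
      moreover have "card T = r" using card_img[OF surj_imp_inj_inv[OF \<open>surj \<sigma>\<close>]] U(2) T by simp
      moreover have "\<sigma> ` T \<in> Q" using image_f_inv_f[OF \<open>surj \<sigma>\<close>] U(3) T by simp
      ultimately show "T \<in> {T. T \<subseteq> S \<and> card T = r \<and> \<sigma> ` T \<in> Q}" by blast
    qed
  qed
  then show ?thesis by (rule bij_betw_same_card)
qed

text \<open>Averaging over all relabellings \<open>\<sigma>\<close> of \<open>S\<close>: each \<open>r\<close>-set is carried into \<open>Q\<close> by equally many
  \<open>\<sigma>\<close>, so a bound on the hits of \<open>F\<close> for every \<open>\<sigma>\<close> bounds the density of \<open>F\<close> by that of \<open>Q\<close>.\<close>
lemma card_mult_le_by_averaging:
  assumes "finite S" and F_sub: "F \<subseteq> {T. T \<subseteq> S \<and> card T = r}"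
    and bound: "\<And>\<sigma>. \<sigma> permutes S \<Longrightarrow> card {T \<in> F. \<sigma> ` T \<in> Q} \<le> B"
  shows "card F * card {U. U \<subseteq> S \<and> card U = r \<and> U \<in> Q} \<le> B * card {T. T \<subseteq> S \<and> card T = r}"
proof (cases "{T. T \<subseteq> S \<and> card T = r} = {}")
  case True
  with F_sub have "F = {}" by blast
  then show ?thesis by simp
next
  case False
  let ?P = "{\<sigma>. \<sigma> permutes S}"
  let ?K = "{T. T \<subseteq> S \<and> card T = r}"
  let ?hits = "\<lambda>T. {\<sigma> \<in> ?P. \<sigma> ` T \<in> Q}"
  let ?q = "card {U. U \<subseteq> S \<and> card U = r \<and> U \<in> Q}"
  obtain T0 where "T0 \<in> ?K" using False by blast
  have fin: "finite ?P" "finite ?K" "finite F"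
    using finite_permutations[OF \<open>finite S\<close>] finite_subset[OF F_sub] \<open>finite S\<close> by auto
  have hits: "\<forall>T \<in> ?K. card (?hits T) = card (?hits T0)"
  proof
    fix T assume "T \<in> ?K"
    then show "card (?hits T) = card (?hits T0)"
      using card_permutes_image_in_eq[OF \<open>finite S\<close>, of T T0 Q] \<open>T0 \<in> ?K\<close> by simp
  qed
  have "card (?hits T0) * card F = (\<Sum>\<sigma> \<in> ?P. card {T \<in> F. \<sigma> ` T \<in> Q})"
    by (rule sum_multicount[OF fin(1,3), symmetric]) (use hits F_sub in blast)
  also have "\<dots> \<le> card ?P * B"
    using sum_mono[of ?P _ "\<lambda>_. B"] bound by simp
  finally have F_bound: "card (?hits T0) * card F \<le> card ?P * B" .
  have "card (?hits T0) * card ?K = (\<Sum>\<sigma> \<in> ?P. card {T \<in> ?K. \<sigma> ` T \<in> Q})"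
    by (rule sum_multicount[OF fin(1,2), symmetric]) (use hits in blast)
  also have "\<dots> = (\<Sum>\<sigma> \<in> ?P. ?q)"
    by (rule sum.cong) (simp_all add: card_subsets_image_in_eq)
  also have "\<dots> = card ?P * ?q" by simp
  finally have K_count: "card (?hits T0) * card ?K = card ?P * ?q" .
  have "card ?P * (card F * ?q) = card ?K * (card (?hits T0) * card F)"
    by (simp add: K_count[symmetric] algebra_simps)
  also have "\<dots> \<le> card ?K * (card ?P * B)"
    using F_bound by (rule mult_le_mono2)
  finally have "card ?P * (card F * ?q) \<le> card ?P * (B * card ?K)"
    by (simp add: algebra_simps)
  moreover have "card ?P > 0"
    using fin(1) card_gt_0_iff permutes_id by blast
  ultimately show ?thesis by simp
qed

section \<open>Rainbow triples of residues\<close>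

definition residue_rainbow :: "nat set set" where
  "residue_rainbow = {U. (\<lambda>x. x mod 3) ` U = {0, 1, 2}}"

lemma residue_progression_bounds:
  fixes i j n :: nat
  assumes "j < 3" and "i < (n + 2 - j) div 3"
  shows "3 * i + j < n" and "(3 * i + j) mod 3 = j"
proof -
  have "Suc i * 3 \<le> (n + 2 - j) div 3 * 3"
    using assms(2) by (intro mult_le_mono1) simp
  also have "\<dots> \<le> n + 2 - j" by (rule div_times_less_eq_dividend)
  finally show "3 * i + j < n" using assms(1) by simp
  show "(3 * i + j) mod 3 = j" using assms(1) by simp
qed

lemma inj_on_triple_disjoint:
  assumes "A \<inter> B = {}" "A \<inter> C = {}" "B \<inter> C = {}"
  shows "inj_on (\<lambda>(a, b, c). {a, b, c}) (A \<times> B \<times> C)"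
proof (rule inj_onI)
  fix u v assume u: "u \<in> A \<times> B \<times> C" and v: "v \<in> A \<times> B \<times> C"
    and eq: "(\<lambda>(a, b, c). {a, b, c}) u = (\<lambda>(a, b, c). {a, b, c}) v"
  obtain a b c where abc: "u = (a, b, c)" by (cases u) blast
  obtain a' b' c' where abc': "v = (a', b', c')" by (cases v) blast
  have "{a, b, c} = {a', b', c'}" using eq unfolding abc abc' by simp
  then have "a \<in> {a', b', c'}" "b \<in> {a', b', c'}" "c \<in> {a', b', c'}" by blast+
  then have "a = a'" "b = b'" "c = c'" using u v assms unfolding abc abc' by blast+
  then show "u = v" unfolding abc abc' by simp
qed

lemma residue_products_le_card_rainbow:
  "(n + 2) div 3 * ((n + 1) div 3) * (n div 3)
    \<le> card {U. U \<subseteq> {0..<n} \<and> card U = 3 \<and> U \<in> residue_rainbow}"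
proof -
  define A where "A j = (\<lambda>i. 3 * i + j) ` {..<(n + 2 - j) div 3}" for j
  have A: "x < n \<and> x mod 3 = j" if "x \<in> A j" "j < 3" for x j
    using that residue_progression_bounds unfolding A_def by blast
  have card_A: "card (A j) = (n + 2 - j) div 3" for j
    unfolding A_def by (simp add: card_image inj_on_def)
  have "A 0 \<inter> A 1 = {}" "A 0 \<inter> A 2 = {}" "A 1 \<inter> A 2 = {}"
    using A[of _ 0] A[of _ 1] A[of _ 2] by fastforce+
  note inj = inj_on_triple_disjoint[OF this]
  let ?R = "{U. U \<subseteq> {0..<n} \<and> card U = 3 \<and> U \<in> residue_rainbow}"
  have "(\<lambda>(a, b, c). {a, b, c}) ` (A 0 \<times> A 1 \<times> A 2) \<subseteq> ?R"
  proof
    fix U assume "U \<in> (\<lambda>(a, b, c). {a, b, c}) ` (A 0 \<times> A 1 \<times> A 2)"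
    then obtain a b c where "a \<in> A 0" "b \<in> A 1" "c \<in> A 2" and U: "U = {a, b, c}" by auto
    then have mods: "a mod 3 = 0" "b mod 3 = 1" "c mod 3 = 2" and "a < n" "b < n" "c < n"
      using A by auto
    then have "a \<noteq> b" "a \<noteq> c" "b \<noteq> c" by auto
    then have "card U = 3" using U by simp
    moreover have "U \<subseteq> {0..<n}" using U \<open>a < n\<close> \<open>b < n\<close> \<open>c < n\<close> by simp
    moreover have "U \<in> residue_rainbow" using U mods by (simp add: residue_rainbow_def)
    ultimately show "U \<in> ?R" by blast
  qed
  moreover have "finite ?R" by (rule finite_subset[of _ "Pow {0..<n}"]) auto
  ultimately have "card (A 0 \<times> A 1 \<times> A 2) \<le> card ?R" using inj card_inj_on_le by blast
  then show ?thesis by (simp add: card_A card_cartesian_product)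
qed

lemma six_times_choose_three: "6 * (n choose 3) = n * (n - 1) * (n - 2)"
proof (induction n)
  case (Suc n)
  have "Suc n choose 3 = (n choose 3) + (n choose 2)"
    by (simp add: numeral_3_eq_3 numeral_2_eq_2)
  moreover have "2 * (n choose 2) = n * (n - 1)"
    unfolding choose_two by (cases n) auto
  ultimately show ?case using Suc by (cases n; cases "n - 1"; simp add: algebra_simps)
qed simp

lemma choose_three_le_residue_products:
  "2 * (n choose 3) \<le> 9 * ((n + 2) div 3 * ((n + 1) div 3) * (n div 3))"
proof -
  have "n \<le> 3 * ((n + 2) div 3)" "n - 1 \<le> 3 * ((n + 1) div 3)" "n - 2 \<le> 3 * (n div 3)"
    by presburger+
  then have "n * (n - 1) * (n - 2) \<le> (3 * ((n + 2) div 3)) * (3 * ((n + 1) div 3)) * (3 * (n div 3))"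
    by (intro mult_le_mono) auto
  then show ?thesis using six_times_choose_three[of n] by (simp add: algebra_simps)
qed

lemma div_less_ceiling_div:
  fixes a n q :: nat
  assumes "0 < q" and "a < n"
  shows "a div q < (n + q - 1) div q"
proof -
  have "a div q * q \<le> a" by (rule div_times_less_eq_dividend)
  then have "Suc (a div q) * q \<le> n + q - 1" using assms by (simp only: mult_Suc)
  then have "Suc (a div q) \<le> (n + q - 1) div q"
    by (simp only: less_eq_div_iff_mult_less_eq[OF \<open>0 < q\<close>])
  then show ?thesis by simp
qed

lemma le_of_density_bounds:
  fixes f q B C :: nat
  assumes "f \<le> C" and "f * q \<le> B * C" and "2 * C \<le> 9 * q"
  shows "2 * f \<le> 9 * B"
proof (cases "C = 0")
  case False
  have "C * (2 * f) = (2 * C) * f" by simp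
  also have "\<dots> \<le> (9 * q) * f" using assms(3) by (rule mult_le_mono1)
  also have "\<dots> = 9 * (f * q)" by simp
  also have "\<dots> \<le> 9 * (B * C)" using assms(2) by (rule mult_le_mono2)
  also have "\<dots> = C * (9 * B)" by simp
  finally show ?thesis using False by simp
qed (use assms(1) in simp)

lemma triangles_le_of_no_odd_cycle:
  assumes "k \<ge> 1" and no_odd: "\<not> has_cycle E (2 * k + 1)"
  shows "triangles {0..<n} E \<le> 9 * (k - 1) * ex_bip_cyc ((n + 2) div 3) ((n + 2) div 3) (2 * k)"
proof -
  let ?S = "{0..<n}"
  let ?X = "ex_bip_cyc ((n + 2) div 3) ((n + 2) div 3) (2 * k)"
  let ?F = "{T. T \<subseteq> ?S \<and> card T = 3 \<and> (\<forall>x\<in>T. \<forall>y\<in>T. x \<noteq> y \<longrightarrow> {x, y} \<in> E)}"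
  let ?q = "card {U. U \<subseteq> ?S \<and> card U = 3 \<and> U \<in> residue_rainbow}"
  have rainbow: "card {T \<in> ?F. \<sigma> ` T \<in> residue_rainbow} \<le> 2 * (k - 1) * ?X" if "\<sigma> permutes ?S" for \<sigma>
  proof -
    have "inj_on (\<lambda>x. (\<sigma> x mod 3, \<sigma> x div 3)) ?S"
    proof (rule inj_onI)
      fix x y assume "(\<sigma> x mod 3, \<sigma> x div 3) = (\<sigma> y mod 3, \<sigma> y div 3)"
      then have "\<sigma> x = \<sigma> y" by (metis div_mult_mod_eq prod.inject)
      then show "x = y" using permutes_inj[OF that] by (simp add: inj_eq)
    qed
    moreover have "\<forall>x \<in> ?S. \<sigma> x div 3 < (n + 2) div 3"
      using permutes_in_image[OF that] div_less_ceiling_div[of 3 _ n] by simp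
    moreover have "{T \<in> ?F. \<sigma> ` T \<in> residue_rainbow} = {T. T \<subseteq> ?S \<and> card T = 3 \<and>
        (\<forall>x\<in>T. \<forall>y\<in>T. x \<noteq> y \<longrightarrow> {x, y} \<in> E) \<and> (\<lambda>x. \<sigma> x mod 3) ` T = {0, 1, 2}}"
      by (auto simp: residue_rainbow_def image_image)
    ultimately show ?thesis
      using card_rainbow_triangles_le[of ?S 0 1 2, OF _ _ _ _ _ _ \<open>k \<ge> 1\<close> no_odd] by simp
  qed
  have F_sub: "?F \<subseteq> {T. T \<subseteq> ?S \<and> card T = 3}" by blast
  have "card ?F \<le> n choose 3"
    using card_mono[OF _ F_sub] n_subsets[of ?S 3] by simp
  moreover have "card ?F * ?q \<le> 2 * (k - 1) * ?X * (n choose 3)"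
    using card_mult_le_by_averaging[of ?S ?F 3 residue_rainbow, OF _ F_sub rainbow]
    by (simp add: n_subsets)
  moreover have "2 * (n choose 3) \<le> 9 * ?q"
    using choose_three_le_residue_products[of n] residue_products_le_card_rainbow[of n] by linarith
  ultimately have "2 * card ?F \<le> 9 * (2 * (k - 1) * ?X)"
    by (rule le_of_density_bounds)
  then show ?thesis unfolding triangles_def by simp
qed

lemma t_cyc_le:
  assumes "0 < l" and "\<And>E. simple_graph {0..<n} E \<Longrightarrow> \<not> has_cycle E l \<Longrightarrow> triangles {0..<n} E \<le> B"
  shows "t_cyc l n \<le> B"
proof -
  let ?A = "{triangles {0..<n} E | E. simple_graph {0..<n} E \<and> \<not> has_cycle E l}"
  have "?A \<subseteq> {..card (Pow {0..<n})}"
  proof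
    fix t assume "t \<in> ?A"
    then obtain E where "t = triangles {0..<n} E" by blast
    moreover have "triangles {0..<n} E \<le> card (Pow {0..<n})"
      unfolding triangles_def by (rule card_mono) auto
    ultimately show "t \<in> {..card (Pow {0..<n})}" by simp
  qed
  then have "finite ?A" by (rule finite_subset) simp
  moreover have "simple_graph {0..<n} {}" "\<not> has_cycle {} l"
    using \<open>0 < l\<close> by (auto simp: simple_graph_def has_cycle_def)
  then have "?A \<noteq> {}" by blast
  moreover have "\<forall>t \<in> ?A. t \<le> B" using assms(2) by blast
  ultimately show ?thesis unfolding t_cyc_def by (intro Max.boundedI) auto
qed

theorem theorem1:
  fixes k n :: nat
  assumes "k \<ge> 2" and "n \<ge> 1"
  shows "t_cyc (2 * k + 1) n \<le> 9 * (k - 1) * ex_bip_cyc ((n + 2) div 3) ((n + 2) div 3) (2 * k)"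
  using assms(1) by (intro t_cyc_le triangles_le_of_no_odd_cycle) simp_all

end
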